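(* Let $\widehat{A} = A + \epsilon B$ with $A, B \in \mathbb{R}^{n\times n}$ and $Ind(\widehat{A}) = k$. Then a dual matrix $\widehat{X} = X + \epsilon R$ with $X,R\in\mathbb{R}^{n\times n}$ is a dual Drazin generalized inverse of $\widehat{A}$ if and only if $X = A^{D}$ and $$A^kA^DB+A^kRA+\Big(\sum_{i=0}^{k-1}A^{k-1-i}BA^{i}\Big)(A^DA-I)=0,$$ $$R=A^{D}AR+A^{D}BA^{D}+RAA^{D},$$ $$AR + BA^{D} = RA + A^DB.$$
   Context: A dual number is $a+\epsilon b$ with $a,b\in\mathbb{R}$, where the dual unit $\epsilon$ satisfies $\epsilon\neq 0$, $\epsilon^2=0$ and commutes with real numbers. A dual matrix is $\widehat{A}=A+\epsilon B$ with $A,B$ real matrices; sums and products are computed formally using $\epsilon^2=0$, e.g. $(A+\epsilon B)(C+\epsilon D)=AC+\epsilon(AD+BC)$, and two dual matrices are equal iff their real parts and their dual parts are equal. $\mathbb{D}^n$ denotes the set of dual column vectors of length $n$. For a square dual matrix $\widehat{A}$, $R(\widehat{A}^k)=\{\widehat{A}^k\widehat{z}:\widehat{z}\in\mathbb{D}^n\}$, and the dual index $Ind(\widehat{A})$ is the smallest nonnegative integer $k$ with $R(\widehat{A}^k)=R(\widehat{A}^{k+1})$. For a real square matrix $A$, $A^D$ denotes its Drazin inverse. For $Ind(\widehat{A})=k$, a dual matrix $\widehat{X}$ is a dual Drazin generalized inverse (DDGI) of $\widehat{A}$ if $\widehat{A}^{k}\widehat{X}\widehat{A} = \widehat{A}^{k}$,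 $\widehat{X}\widehat{A}\widehat{X} = \widehat{X}$ and $\widehat{A}\widehat{X} =\widehat{X}\widehat{A}$. *)

theory Defs
  imports "HOL-Analysis.Analysis"
begin

text \<open>Real n x n matrices are rendered as real^'n^'n (the dimension n = CARD('n)).
A dual matrix A + eps B is represented by the pair (A, B); a dual vector
x + eps y by the pair (x, y).\<close>

type_synonym 'n rmat = "real^'n^'n"
type_synonym 'n dmat = "'n rmat \<times> 'n rmat"
type_synonym 'n dvec = "(real^'n) \<times> (real^'n)"

fun mpow :: "'n::finite rmat \<Rightarrow> nat \<Rightarrow> 'n rmat" where
  "mpow A 0 = mat 1"
| "mpow A (Suc k) = A ** mpow A k"

definition real_index :: "'n::finite rmat \<Rightarrow> nat" where
  "real_index A = (LEAST k. range (\<lambda>z. mpow A k *v z) = range (\<lambda>z. mpow A (Suc k) *v z))"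

definition drazin :: "'n::finite rmat \<Rightarrow> 'n rmat" where
  "drazin A = (THE X. mpow A (real_index A) ** X ** A = mpow A (real_index A)
                      \<and> X ** A ** X = X \<and> A ** X = X ** A)"

text \<open>Dual matrix arithmetic, using eps^2 = 0.\<close>
definition dmult :: "'n::finite dmat \<Rightarrow> 'n dmat \<Rightarrow> 'n dmat" where
  "dmult M N = (fst M ** fst N, fst M ** snd N + snd M ** fst N)"

definition dmultv :: "'n::finite dmat \<Rightarrow> 'n dvec \<Rightarrow> 'n dvec" where
  "dmultv M z = (fst M *v fst z, fst M *v snd z + snd M *v fst z)"

fun dpow :: "'n::finite dmat \<Rightarrow> nat \<Rightarrow> 'n dmat" where
  "dpow M 0 = (mat 1, 0)"
| "dpow M (Suc k) = dmult M (dpow M k)"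

definition drange :: "'n::finite dmat \<Rightarrow> nat \<Rightarrow> 'n dvec set" where
  "drange M k = range (\<lambda>z. dmultv (dpow M k) z)"

definition dual_index :: "'n::finite dmat \<Rightarrow> nat" where
  "dual_index M = (LEAST k. drange M k = drange M (Suc k))"

definition is_DDGI :: "'n::finite dmat \<Rightarrow> 'n dmat \<Rightarrow> bool" where
  "is_DDGI M X \<longleftrightarrow>
     (let k = dual_index M in
       dmult (dmult (dpow M k) X) M = dpow M k
     \<and> dmult (dmult X M) X = X
     \<and> dmult M X = dmult X M)"

end

theory Submission
  imports Defs
begin

text \<open>Writing out the dual products with \<open>\<epsilon>\<^sup>2 = 0\<close>, the real parts of the DDGI equations
  are the Drazin equations for \<open>A\<close> at exponent \<open>k\<close>, and their dual parts are the three
  displayed identities. Taking real parts in \<open>R((A + \<epsilon>B)\<^sup>k) = R((A + \<epsilon>B)\<^sup>k\<^sup>+\<^sup>1)\<close> gives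
  \<open>R(A\<^sup>k) = R(A\<^sup>k\<^sup>+\<^sup>1)\<close>, hence \<open>ind(A) \<le> k\<close>. In any monoid the Drazin equations at a fixed
  exponent have at most one solution, and they persist to larger exponents, so at exponent
  \<open>k\<close> their unique solution is \<open>A\<^sup>D\<close>.\<close>

section \<open>Drazin inverses in a monoid\<close>

definition is_drazin_inverse :: "nat \<Rightarrow> 'a::monoid_mult \<Rightarrow> 'a \<Rightarrow> bool" where
  "is_drazin_inverse m a x \<longleftrightarrow> a ^ m * x * a = a ^ m \<and> x * a * x = x \<and> a * x = x * a"

lemma is_drazin_inverse_iff:
  "is_drazin_inverse m a x \<longleftrightarrow> a ^ Suc m * x = a ^ m \<and> x * a * x = x \<and> a * x = x * a"
  unfolding is_drazin_inverse_def by (metis mult.assoc power_Suc2)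

lemma is_drazin_inverse_mono:
  assumes x: "is_drazin_inverse m a x" and "m \<le> m'"
  shows "is_drazin_inverse m' a x"
proof -
  obtain d where m': "m' = d + m" using \<open>m \<le> m'\<close> le_iff_add by (metis add.commute)
  have "a ^ Suc m' * x = a ^ d * (a ^ Suc m * x)"
    unfolding m' by (metis add_Suc_right mult.assoc power_add)
  also have "\<dots> = a ^ m'" using x unfolding m' is_drazin_inverse_iff by (simp add: power_add)
  finally show ?thesis using x is_drazin_inverse_iff by blast
qed

lemma power_mult_commuting:
  fixes a b :: "'a::monoid_mult"
  assumes "a * b = b * a"
  shows "(a * b) ^ n = a ^ n * b ^ n"
proof (induction n)
  case (Suc n)
  have "(a * b) ^ Suc n = a * (b * a ^ n) * b ^ n" using Suc by (simp add: mult.assoc)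
  also have "\<dots> = a ^ Suc n * b ^ Suc n"
    by (simp add: power_commuting_commutes[OF assms, symmetric] mult.assoc)
  finally show ?case .
qed simp

lemma idempotent_power: "(e::'a::monoid_mult) * e = e \<Longrightarrow> e ^ Suc n = e"
  by (induction n) (simp_all add: mult.assoc[symmetric])

lemma drazin_projection_eq_powers:
  assumes "is_drazin_inverse m a x"
  shows "a * x = a ^ Suc m * x ^ Suc m" and "a * x = x ^ Suc m * a ^ Suc m"
proof -
  have comm: "a * x = x * a" and xax: "x * a * x = x"
    using assms by (simp_all add: is_drazin_inverse_def)
  have "a * x * (a * x) = a * (x * a * x)" by (simp add: mult.assoc)
  then have "(a * x) ^ Suc m = a * x" using xax idempotent_power by metis
  then show "a * x = a ^ Suc m * x ^ Suc m" and "a * x = x ^ Suc m * a ^ Suc m"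
    using power_mult_commuting[OF comm] power_mult_commuting[OF comm[symmetric]] comm by metis+
qed

lemma is_drazin_inverse_unique:
  assumes x: "is_drazin_inverse m a x" and y: "is_drazin_inverse m a y"
  shows "x = y"
proof -
  have x1: "a ^ Suc m * x = a ^ m" and x2: "x * a * x = x" and x3: "a * x = x * a"
    using x is_drazin_inverse_iff by blast+
  have y1: "a ^ Suc m * y = a ^ m" and y2: "y * a * y = y" and y3: "a * y = y * a"
    using y is_drazin_inverse_iff by blast+
  have ax_absorb: "a ^ Suc m * (a * x) = a ^ Suc m"
  proof -
    have "a ^ Suc m * (a * x) = a * (a ^ Suc m * x)" by (metis mult.assoc power_commutes)
    also have "\<dots> = a ^ Suc m" unfolding x1 by simp
    finally show ?thesis .
  qed
  have ay_absorb: "a * y * a ^ Suc m = a ^ Suc m"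
  proof -
    have "a * y * a ^ Suc m = a ^ Suc m * y * a"
      by (metis y3 power_commuting_commutes mult.assoc)
    also have "\<dots> = a ^ Suc m" unfolding y1 by (simp add: power_commutes)
    finally show ?thesis .
  qed
  have "a * x = a * y * (a * x)"
    using drazin_projection_eq_powers(1)[OF x] ay_absorb by (metis mult.assoc)
  moreover have "a * y = a * y * (a * x)"
    using drazin_projection_eq_powers(2)[OF y] ax_absorb by (metis mult.assoc)
  ultimately have axy: "a * x = a * y" by simp
  have "x = x * (a * y)" using x2 axy by (simp add: mult.assoc)
  also have "\<dots> = a * y * y" using x3 axy by (simp add: mult.assoc)
  also have "\<dots> = y" using y2 y3 by (simp add: mult.assoc)
  finally show ?thesis .
qed

lemma power_right_factor_iterate:
  fixes a u :: "'a::monoid_mult"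
  assumes "a ^ Suc m * u = a ^ m"
  shows "a ^ (m + j) * u ^ j = a ^ m"
proof (induction j)
  case (Suc j)
  have "a ^ (m + Suc j) = a ^ j * a ^ Suc m"
    by (metis add.commute add_Suc_right power_add)
  then have "a ^ (m + Suc j) * u ^ Suc j = a ^ j * (a ^ Suc m * u) * u ^ j"
    by (simp only: mult.assoc power_Suc)
  also have "\<dots> = a ^ (m + j) * u ^ j"
    by (simp only: assms power_add add.commute)
  finally show ?case using Suc by simp
qed simp

lemma power_left_factor_iterate:
  fixes a v :: "'a::monoid_mult"
  assumes "v * a ^ Suc m = a ^ m"
  shows "v ^ j * a ^ (m + j) = a ^ m"
proof (induction j)
  case (Suc j)
  have "a ^ (m + Suc j) = a ^ Suc m * a ^ j"
    by (metis add_Suc_shift power_add)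
  then have "v ^ Suc j * a ^ (m + Suc j) = v ^ j * (v * a ^ Suc m) * a ^ j"
    by (metis mult.assoc power_Suc2)
  also have "\<dots> = v ^ j * a ^ (m + j)"
    by (simp only: assms power_add mult.assoc)
  finally show ?case using Suc by simp
qed simp

text \<open>The witness is the classical \<open>a ^ m * u ^ Suc m\<close>; it also equals \<open>v ^ Suc m * a ^ m\<close>,
  which is what makes it commute with \<open>a\<close>.\<close>
lemma is_drazin_inverse_exists:
  fixes a u v :: "'a::monoid_mult"
  assumes u: "a ^ Suc m * u = a ^ m" and v: "v * a ^ Suc m = a ^ m"
  shows "\<exists>x. is_drazin_inverse m a x"
proof -
  note U = power_right_factor_iterate[OF u] and V = power_left_factor_iterate[OF v]
  define x where "x = a ^ m * u ^ Suc m"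
  have uv: "a ^ m * u ^ m = v ^ m * a ^ m"
    by (metis U V mult.assoc)
  have x_left: "x = v ^ Suc m * a ^ m"
    unfolding x_def by (metis U V mult.assoc)
  have ax: "a * x = a ^ m * u ^ m"
    unfolding x_def by (metis u mult.assoc power_Suc)
  have xa: "x * a = v ^ m * a ^ m"
    unfolding x_left by (metis v mult.assoc power_Suc2)
  have "a ^ Suc m * x = a ^ (m + m) * u ^ m"
    using ax by (metis mult.assoc power_Suc2 power_add)
  then have "a ^ Suc m * x = a ^ m" by (simp only: U)
  moreover have "x * a * x = x"
  proof -
    have "x * a * x = v ^ m * a ^ m * (a ^ m * u ^ Suc m)"
      using xa x_def by metis
    also have "\<dots> = v ^ m * (a ^ (m + m) * u ^ m) * u"
      by (simp only: mult.assoc power_add power_Suc2)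
    also have "\<dots> = a ^ m * u ^ m * u"
      by (simp only: U uv)
    finally show ?thesis
      unfolding x_def by (simp only: mult.assoc power_Suc2)
  qed
  ultimately show ?thesis using ax xa uv is_drazin_inverse_iff by metis
qed

section \<open>Square real matrices\<close>

text \<open>Wrapping square matrices in a type makes them a \<open>monoid_mult\<close>, so that the abstract
  Drazin theory above and the library's power lemmas apply to \<open>mpow\<close>.\<close>
typedef ('n::finite) sqmat = "UNIV :: 'n rmat set"
  morphisms to_matrix of_matrix
  by simp

instantiation sqmat :: (finite) monoid_mult
begin
definition one_sqmat_def: "1 = of_matrix (mat 1)"
definition times_sqmat_def: "a * b = of_matrix (to_matrix a ** to_matrix b)"
instance
  by standard
    (simp_all add: one_sqmat_def times_sqmat_def of_matrix_inverse to_matrix_inverse matrix_mul_assoc)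
end

lemma of_matrix_mult: "of_matrix A * of_matrix B = of_matrix (A ** B)"
  by (simp add: times_sqmat_def of_matrix_inverse)

lemma of_matrix_power: "of_matrix A ^ k = of_matrix (mpow A k)"
  by (induction k) (simp_all add: one_sqmat_def of_matrix_mult)

lemma of_matrix_eq_iff: "of_matrix A = of_matrix B \<longleftrightarrow> A = B"
  by (simp add: of_matrix_inject)

lemma is_drazin_inverse_of_matrix:
  "is_drazin_inverse m (of_matrix A) (of_matrix X) \<longleftrightarrow>
     mpow A m ** X ** A = mpow A m \<and> X ** A ** X = X \<and> A ** X = X ** A"
  by (simp add: is_drazin_inverse_def of_matrix_power of_matrix_mult of_matrix_eq_iff)

lemma mpow_Suc2: "mpow A (Suc k) = mpow A k ** A"
  by (metis of_matrix_eq_iff of_matrix_mult of_matrix_power power_Suc2)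

lemma matrix_add_rdistrib: "((A::real^'n^'m) + B) ** C = A ** C + B ** C"
  by (vector matrix_matrix_mult_def sum.distrib[symmetric] field_simps)

lemma matrix_diff_ldistrib: "(A::real^'n^'m) ** (B - C) = A ** B - A ** C"
  by (vector matrix_matrix_mult_def sum_subtractf[symmetric] field_simps)

lemma matrix_sum_ldistrib: "(A::real^'n^'m) ** sum f S = (\<Sum>i\<in>S. A ** f i)"
  by (induction S rule: infinite_finite_induct) (simp_all add: matrix_add_ldistrib)

lemma range_matrix_mult_subset:
  "range (\<lambda>z. (P ** Q) *v z) \<subseteq> range (\<lambda>z. (P::real^'n^'m) *v z)"
  by (auto simp: matrix_vector_mul_assoc[symmetric])

lemma matrix_factor_right:
  fixes P :: "real^'n^'m" and Q :: "real^'k^'m"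
  assumes "range (\<lambda>z. P *v z) \<subseteq> range (\<lambda>z. Q *v z)"
  shows "\<exists>C. P = Q ** C"
proof -
  have "\<exists>w. P *v axis j 1 = Q *v w" for j
    using assms by blast
  then obtain w where w: "\<And>j. P *v axis j 1 = Q *v w j" by metis
  have "P $ i $ j = (Q ** (\<chi> i j. w j $ i)) $ i $ j" for i j
  proof -
    have "P $ i $ j = (P *v axis j 1) $ i" by (simp add: matrix_vector_mult_basis column_def)
    also have "\<dots> = (Q *v w j) $ i" by (simp only: w)
    also have "\<dots> = (Q ** (\<chi> i j. w j $ i)) $ i $ j"
      by (simp add: matrix_vector_mult_def matrix_matrix_mult_def)
    finally show ?thesis .
  qed
  then show ?thesis by (auto simp: vec_eq_iff)
qed

text \<open>Equal ranks make the row spaces of \<open>P\<close> and \<open>M P\<close> coincide.\<close>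
lemma matrix_factor_left:
  fixes P :: "real^'n^'m" and M :: "real^'m^'k"
  assumes "rank (M ** P) = rank P"
  shows "\<exists>V. P = V ** (M ** P)"
proof -
  let ?rg = "\<lambda>N::real^_^_. range (\<lambda>z. N *v z)"
  have "?rg (transpose (M ** P)) \<subseteq> ?rg (transpose P)"
    unfolding matrix_transpose_mul by (rule range_matrix_mult_subset)
  moreover have "dim (?rg (transpose (M ** P))) = dim (?rg (transpose P))"
    using assms by (metis rank_dim_range rank_transpose)
  ultimately have "?rg (transpose P) \<subseteq> ?rg (transpose (M ** P))"
    using subspace_dim_equal subspace_UNIV linear_subspace_image matrix_vector_mul_linear
    by (metis order_refl)
  then obtain C where "transpose P = transpose (M ** P) ** C"
    using matrix_factor_right by blast
  then have "P = transpose C ** (M ** P)"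
    by (metis matrix_transpose_mul transpose_transpose)
  then show ?thesis by blast
qed

lemma is_drazin_inverse_drazin:
  fixes A :: "'n::finite rmat"
  assumes "range (\<lambda>z. mpow A k *v z) = range (\<lambda>z. mpow A (Suc k) *v z)"
  shows "is_drazin_inverse k (of_matrix A) (of_matrix (drazin A))"
proof -
  define m where "m = real_index A"
  have "m \<le> k" unfolding m_def real_index_def using assms by (rule Least_le)
  have stable: "range (\<lambda>z. mpow A m *v z) = range (\<lambda>z. mpow A (Suc m) *v z)"
    unfolding m_def real_index_def using assms by (rule LeastI)
  obtain U where U: "mpow A (Suc m) ** U = mpow A m"
    using matrix_factor_right[OF equalityD1[OF stable]] by metis
  have "rank (A ** mpow A m) = rank (mpow A m)"
    by (metis stable rank_dim_range mpow.simps(2))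
  then obtain V where V: "V ** mpow A (Suc m) = mpow A m"
    using matrix_factor_left by (metis mpow.simps(2))
  have "\<exists>x. is_drazin_inverse m (of_matrix A) x"
    using is_drazin_inverse_exists[of "of_matrix A" m "of_matrix U" "of_matrix V"]
    unfolding of_matrix_power of_matrix_mult U V by blast
  then obtain X where X: "is_drazin_inverse m (of_matrix A) (of_matrix X)"
    by (metis to_matrix_inverse)
  have "drazin A = X"
    unfolding drazin_def m_def[symmetric]
  proof (rule the_equality)
    show "mpow A m ** X ** A = mpow A m \<and> X ** A ** X = X \<and> A ** X = X ** A"
      using X by (simp only: is_drazin_inverse_of_matrix)
  next
    fix Y assume "mpow A m ** Y ** A = mpow A m \<and> Y ** A ** Y = Y \<and> A ** Y = Y ** A"
    then show "Y = X"
      using X is_drazin_inverse_unique is_drazin_inverse_of_matrix of_matrix_eq_iff by metis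
  qed
  then show ?thesis using X is_drazin_inverse_mono \<open>m \<le> k\<close> by blast
qed

lemma drazin_system_iff:
  fixes A X :: "'n::finite rmat"
  assumes "range (\<lambda>z. mpow A k *v z) = range (\<lambda>z. mpow A (Suc k) *v z)"
  shows "mpow A k ** X ** A = mpow A k \<and> X ** A ** X = X \<and> A ** X = X ** A \<longleftrightarrow> X = drazin A"
  using is_drazin_inverse_drazin[OF assms] is_drazin_inverse_unique is_drazin_inverse_of_matrix
    of_matrix_eq_iff by metis

section \<open>Dual matrices\<close>

lemma dmult_pair [simp]: "dmult (P, Q) (U, V) = (P ** U, P ** V + Q ** U)"
  by (simp add: dmult_def)

lemma dmult_assoc: "dmult (dmult M N) K = dmult M (dmult N K)"
  by (cases M, cases N, cases K)
    (simp add: matrix_add_ldistrib matrix_add_rdistrib matrix_mul_assoc add_ac)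

lemma dmult_one_left: "dmult (mat 1, 0) M = M"
  by (cases M) simp

lemma dmult_one_right: "dmult M (mat 1, 0) = M"
  by (cases M) simp

lemma dpow_Suc2: "dpow M (Suc k) = dmult (dpow M k) M"
  by (induction k) (simp_all add: dmult_one_left dmult_one_right dmult_assoc[symmetric])

lemma dmultv_dmult: "dmultv (dmult M N) z = dmultv M (dmultv N z)"
  by (simp add: dmultv_def dmult_def matrix_vector_mul_assoc[symmetric] matrix_vector_right_distrib
      matrix_vector_mult_add_rdistrib add_ac)

lemma drange_Suc_subset: "drange M (Suc k) \<subseteq> drange M k"
  unfolding drange_def dpow_Suc2 dmultv_dmult by blast

lemma subspace_drange: "subspace (drange M k)"
proof -
  have "linear (dmultv (dpow M k))"
    by (rule linearI) (simp_all add: dmultv_def algebra_simps)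
  then show ?thesis unfolding drange_def by (rule linear_subspace_image[OF _ subspace_UNIV])
qed

text \<open>The ranges \<open>R(M\<^sup>k)\<close> form a decreasing chain of subspaces of a finite-dimensional
  space, so their dimension cannot drop forever.\<close>
lemma drange_dual_index: "drange M (dual_index M) = drange M (Suc (dual_index M))"
proof -
  have "\<exists>k. drange M k = drange M (Suc k)"
  proof (rule ccontr)
    assume "\<nexists>k. drange M k = drange M (Suc k)"
    then have drop: "dim (drange M (Suc k)) < dim (drange M k)" for k
      using subspace_dim_equal[OF subspace_drange subspace_drange drange_Suc_subset]
      by (metis linorder_not_less)
    have "dim (drange M j) + j \<le> dim (drange M 0)" for j
    proof (induction j)
      case (Suc j)
      then show ?case using drop[of j] by linarith
    qed simp
    from this[of "Suc (dim (drange M 0))"] show False by simp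
  qed
  then show ?thesis unfolding dual_index_def by (rule LeastI_ex)
qed

lemma dpow_pair:
  "dpow (A, B) k = (mpow A k, \<Sum>i = 0..<k. mpow A (k - 1 - i) ** B ** mpow A i)"
proof (induction k)
  case (Suc k)
  have "(\<Sum>i = 0..<Suc k. mpow A (Suc k - 1 - i) ** B ** mpow A i)
      = (\<Sum>i = 0..<k. mpow A (k - i) ** B ** mpow A i) + B ** mpow A k"
    by simp
  also have "(\<Sum>i = 0..<k. mpow A (k - i) ** B ** mpow A i)
      = A ** (\<Sum>i = 0..<k. mpow A (k - 1 - i) ** B ** mpow A i)"
    unfolding matrix_sum_ldistrib
  proof (rule sum.cong)
    fix i assume "i \<in> {0..<k}"
    then have "k - i = Suc (k - 1 - i)" by auto
    then show "mpow A (k - i) ** B ** mpow A i = A ** (mpow A (k - 1 - i) ** B ** mpow A i)"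
      by (simp add: matrix_mul_assoc)
  qed simp
  finally have "(\<Sum>i = 0..<Suc k. mpow A (Suc k - 1 - i) ** B ** mpow A i)
      = A ** (\<Sum>i = 0..<k. mpow A (k - 1 - i) ** B ** mpow A i) + B ** mpow A k" .
  then show ?case by (simp only: Suc.IH dpow.simps mpow.simps dmult_pair)
qed simp

lemma range_mpow_stable:
  assumes "drange (A, B) k = drange (A, B) (Suc k)"
  shows "range (\<lambda>z. mpow A k *v z) = range (\<lambda>z. mpow A (Suc k) *v z)"
proof
  show "range (\<lambda>z. mpow A (Suc k) *v z) \<subseteq> range (\<lambda>z. mpow A k *v z)"
    unfolding mpow_Suc2 by (rule range_matrix_mult_subset)
next
  show "range (\<lambda>z. mpow A k *v z) \<subseteq> range (\<lambda>z. mpow A (Suc k) *v z)"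
  proof clarify
    fix w
    have "dmultv (dpow (A, B) k) (w, 0) \<in> drange (A, B) (Suc k)"
      using assms unfolding drange_def by blast
    then obtain z where "dmultv (dpow (A, B) k) (w, 0) = dmultv (dpow (A, B) (Suc k)) z"
      unfolding drange_def by blast
    then have "mpow A k *v w = mpow A (Suc k) *v fst z"
      by (simp add: dpow_pair dmultv_def)
    then show "mpow A k *v w \<in> range (\<lambda>z. mpow A (Suc k) *v z)" by simp
  qed
qed

lemma is_DDGI_pair_iff:
  fixes A B X R :: "'n::finite rmat"
  assumes "dual_index (A, B) = k"
  defines "S \<equiv> \<Sum>i = 0..<k. mpow A (k - 1 - i) ** B ** mpow A i"
  shows "is_DDGI (A, B) (X, R) \<longleftrightarrow>
    (mpow A k ** X ** A = mpow A k \<and> X ** A ** X = X \<and> A ** X = X ** A)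
    \<and> mpow A k ** X ** B + (mpow A k ** R + S ** X) ** A = S
    \<and> X ** A ** R + (X ** B + R ** A) ** X = R
    \<and> A ** R + B ** X = X ** B + R ** A"
  unfolding is_DDGI_def Let_def assms S_def dpow_pair dmult_pair prod.inject by blast

theorem mainTheorem1:
  fixes A B X R :: "real^'n^'n" and k :: nat
  assumes "dual_index (A, B) = k"
  shows "is_DDGI (A, B) (X, R) \<longleftrightarrow>
           (X = drazin A
            \<and> mpow A k ** drazin A ** B + mpow A k ** R ** A
                + (\<Sum>i = 0..<k. mpow A (k - 1 - i) ** B ** mpow A i) ** (drazin A ** A - mat 1) = 0
            \<and> R = drazin A ** A ** R + drazin A ** B ** drazin A + R ** A ** drazin A
            \<and> A ** R + B ** drazin A = R ** A + drazin A ** B)"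
proof -
  have stable: "range (\<lambda>z. mpow A k *v z) = range (\<lambda>z. mpow A (Suc k) *v z)"
    using range_mpow_stable drange_dual_index assms by metis
  show ?thesis
    unfolding is_DDGI_pair_iff[OF assms] drazin_system_iff[OF stable]
    by (auto simp: matrix_add_rdistrib matrix_diff_ldistrib matrix_mul_assoc algebra_simps)
qed

end
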